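(* Let $n > 2k+1$. There exists a deterministic algorithm that, on every instance with $n$ elements of which $k$ are corrupted, outputs a set of exactly $2k+1$ elements containing the uncorrupted maximum, using exactly $(n-(k+1))(2k+1) = 2nk + (n - 2k^2 - 3k - 1)$ comparison queries.
   Context: Model: there are $n$ elements $x_1,\dots,x_n$, exactly $k$ of which are corrupted (unknown to the algorithm). For every pair of distinct elements the comparison graph (a tournament) specifies which one is larger. The comparison graph restricted to the $n-k$ uncorrupted elements is acyclic; comparisons involving corrupted elements may be oriented arbitrarily. The uncorrupted maximum is the uncorrupted element larger than every other uncorrupted element. An algorithm knows $n$ and $k$, may query the orientation of any pair (a comparison query), and outputs a set of elements. *)

theory Defs
  imports Main
begin

text \<open>Elements are 0..<n. A comparison graph is T :: nat => nat => bool,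
  where T i j means: the comparison says x_i is larger than x_j.\<close>

definition tournament :: "nat \<Rightarrow> (nat \<Rightarrow> nat \<Rightarrow> bool) \<Rightarrow> bool" where
  "tournament n T \<longleftrightarrow> (\<forall>i<n. \<forall>j<n. i \<noteq> j \<longrightarrow> (T i j \<longleftrightarrow> \<not> T j i))"

definition uncorrupted_graph :: "nat \<Rightarrow> nat set \<Rightarrow> (nat \<Rightarrow> nat \<Rightarrow> bool) \<Rightarrow> (nat \<times> nat) set" where
  "uncorrupted_graph n C T =
     {(i, j). i < n \<and> j < n \<and> i \<notin> C \<and> j \<notin> C \<and> i \<noteq> j \<and> T i j}"

definition valid_instance :: "nat \<Rightarrow> nat \<Rightarrow> nat set \<Rightarrow> (nat \<Rightarrow> nat \<Rightarrow> bool) \<Rightarrow> bool" where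
  "valid_instance n k C T \<longleftrightarrow>
     C \<subseteq> {0..<n} \<and> card C = k \<and> tournament n T \<and> acyclic (uncorrupted_graph n C T)"

definition uncorrupted_max :: "nat \<Rightarrow> nat set \<Rightarrow> (nat \<Rightarrow> nat \<Rightarrow> bool) \<Rightarrow> nat \<Rightarrow> bool" where
  "uncorrupted_max n C T u \<longleftrightarrow>
     u < n \<and> u \<notin> C \<and> (\<forall>v<n. v \<notin> C \<and> v \<noteq> u \<longrightarrow> T u v)"

text \<open>Deterministic adaptive comparison algorithms = decision trees.\<close>

datatype alg = Query nat nat alg alg | Output "nat set"

fun run :: "alg \<Rightarrow> (nat \<Rightarrow> nat \<Rightarrow> bool) \<Rightarrow> (nat \<times> nat) list \<times> nat set" where
  "run (Output S) T = ([], S)"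
| "run (Query i j a b) T =
     (let (qs, S) = (if T i j then run a T else run b T) in ((i, j) # qs, S))"

end

theory Submission
  imports Defs
begin

text \<open>Keep a pool of 2k+1 candidates whose pairwise comparisons are all known (a round robin
  among the first 2k+1 elements costs k(2k+1) queries). Each further element is compared with
  the whole pool (2k+1 queries), giving 2k+2 mutually compared elements. Only corrupted elements
  beat the uncorrupted maximum, so it is beaten at most k times there; but counting the
  (2k+2)(2k+1)/2 comparisons shows that some element is beaten at least k+1 times. Discarding
  that element keeps the uncorrupted maximum in the pool.\<close>

definition sound_record :: "(nat \<Rightarrow> nat \<Rightarrow> bool) \<Rightarrow> (nat \<times> nat) set \<Rightarrow> bool" where
  "sound_record T E \<longleftrightarrow> (\<forall>(a, b) \<in> E. a \<noteq> b \<and> T a b)"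

definition complete_on :: "nat set \<Rightarrow> (nat \<times> nat) set \<Rightarrow> bool" where
  "complete_on A E \<longleftrightarrow> (\<forall>a\<in>A. \<forall>b\<in>A. a \<noteq> b \<longrightarrow> (a, b) \<in> E \<or> (b, a) \<in> E)"

definition valid_queries :: "nat \<Rightarrow> (nat \<times> nat) list \<Rightarrow> bool" where
  "valid_queries n qs \<longleftrightarrow> (\<forall>(i, j) \<in> set qs. i < n \<and> j < n \<and> i \<noteq> j)"

definition good_outcome ::
    "nat \<Rightarrow> nat \<Rightarrow> nat set \<Rightarrow> (nat \<Rightarrow> nat \<Rightarrow> bool) \<Rightarrow> nat \<Rightarrow> (nat \<times> nat) list \<times> nat set \<Rightarrow> bool" where
  "good_outcome n k C T q r \<longleftrightarrow>
     (let (qs, S) = r in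
        valid_queries n qs \<and> length qs = q
      \<and> S \<subseteq> {0..<n} \<and> card S = 2 * k + 1
      \<and> (\<forall>u. uncorrupted_max n C T u \<longrightarrow> u \<in> S))"

lemma good_outcome_prepend:
  assumes "good_outcome n k C T q (qs, S)" and "valid_queries n qs'"
  shows "good_outcome n k C T (length qs' + q) (qs' @ qs, S)"
  using assms by (auto simp: good_outcome_def valid_queries_def)

text \<open>The algorithms carry the set E of comparison results seen so far, (a, b) \<in> E meaning
  that a was reported larger than b; the continuation c chooses how to go on from it.\<close>

fun query_against :: "nat \<Rightarrow> nat list \<Rightarrow> (nat \<times> nat) set \<Rightarrow> ((nat \<times> nat) set \<Rightarrow> alg) \<Rightarrow> alg" where
  "query_against x [] E c = c E"
| "query_against x (y # ys) E c =
     Query x y (query_against x ys (insert (x, y) E) c) (query_against x ys (insert (y, x) E) c)"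

definition record_against ::
    "nat \<Rightarrow> nat list \<Rightarrow> (nat \<Rightarrow> nat \<Rightarrow> bool) \<Rightarrow> (nat \<times> nat) set \<Rightarrow> (nat \<times> nat) set" where
  "record_against x ys T E =
     E \<union> {(x, y) | y. y \<in> set ys \<and> T x y} \<union> {(y, x) | y. y \<in> set ys \<and> \<not> T x y}"

lemma run_query_against:
  "run (query_against x ys E c) T =
     (map (Pair x) ys @ fst (run (c (record_against x ys T E)) T),
      snd (run (c (record_against x ys T E)) T))"
proof (induction ys arbitrary: E)
  case Nil
  then show ?case by (simp add: record_against_def)
next
  case (Cons y ys)
  have "T x y \<Longrightarrow> record_against x ys T (insert (x, y) E) = record_against x (y # ys) T E"
    and "\<not> T x y \<Longrightarrow> record_against x ys T (insert (y, x) E) = record_against x (y # ys) T E"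
    by (auto simp: record_against_def)
  with Cons show ?case by (auto split: prod.splits)
qed

lemma sound_record_against:
  assumes "tournament n T" "sound_record T E" "x < n" "set ys \<subseteq> {..<n}" "x \<notin> set ys"
  shows "sound_record T (record_against x ys T E)"
  unfolding sound_record_def
proof (intro ballI)
  fix p assume "p \<in> record_against x ys T E"
  then consider "p \<in> E" | y where "p = (x, y)" "y \<in> set ys" "T x y"
    | y where "p = (y, x)" "y \<in> set ys" "\<not> T x y"
    unfolding record_against_def by blast
  then show "case p of (a, b) \<Rightarrow> a \<noteq> b \<and> T a b"
  proof cases
    case 1
    then show ?thesis using assms(2) unfolding sound_record_def by blast
  next
    case 2
    then show ?thesis using assms(5) by auto
  next
    case (3 y)
    then have "y < n" "y \<noteq> x" using assms(4,5) by auto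
    then have "T y x" using 3 assms(1,3) unfolding tournament_def by blast
    then show ?thesis using 3 \<open>y \<noteq> x\<close> by simp
  qed
qed

lemma complete_on_record_against:
  "complete_on (set ys) E \<Longrightarrow> complete_on (set (x # ys)) (record_against x ys T E)"
  unfolding complete_on_def record_against_def by auto

lemma subset_record_against: "E \<subseteq> record_against x ys T E"
  unfolding record_against_def by blast

primrec round_robin :: "nat list \<Rightarrow> (nat \<times> nat) set \<Rightarrow> ((nat \<times> nat) set \<Rightarrow> alg) \<Rightarrow> alg" where
  "round_robin [] E c = c E"
| "round_robin (x # xs) E c = query_against x xs E (\<lambda>E'. round_robin xs E' c)"

lemma run_round_robin:
  assumes "tournament n T" "distinct xs" "set xs \<subseteq> {..<n}" "sound_record T E"
  shows "\<exists>E' qs. run (round_robin xs E c) T = (qs @ fst (run (c E') T), snd (run (c E') T))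
      \<and> (\<forall>(i, j) \<in> set qs. i \<in> set xs \<and> j \<in> set xs \<and> i \<noteq> j)
      \<and> 2 * length qs = length xs * (length xs - 1)
      \<and> sound_record T E' \<and> complete_on (set xs) E' \<and> E \<subseteq> E'"
  using assms(2-4)
proof (induction xs arbitrary: E)
  case Nil
  then show ?case by (auto simp: complete_on_def)
next
  case (Cons x xs)
  let ?E = "record_against x xs T E"
  have "sound_record T ?E"
    using sound_record_against[OF assms(1) Cons.prems(3)] Cons.prems(1,2) by auto
  then have "\<exists>E' qs. run (round_robin xs ?E c) T = (qs @ fst (run (c E') T), snd (run (c E') T))
      \<and> (\<forall>(i, j) \<in> set qs. i \<in> set xs \<and> j \<in> set xs \<and> i \<noteq> j)
      \<and> 2 * length qs = length xs * (length xs - 1)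
      \<and> sound_record T E' \<and> complete_on (set xs) E' \<and> ?E \<subseteq> E'"
    using Cons.IH Cons.prems(1,2) by simp
  then obtain E' qs where run: "run (round_robin xs ?E c) T = (qs @ fst (run (c E') T), snd (run (c E') T))"
      and qs: "\<forall>(i, j) \<in> set qs. i \<in> set xs \<and> j \<in> set xs \<and> i \<noteq> j"
      and len: "2 * length qs = length xs * (length xs - 1)"
      and sound: "sound_record T E'" and compl: "complete_on (set xs) E'" and sub: "?E \<subseteq> E'"
    by blast
  let ?qs = "map (Pair x) xs @ qs"
  have "\<forall>y\<in>set xs. (x, y) \<in> ?E \<or> (y, x) \<in> ?E"
    unfolding record_against_def by blast
  then have "complete_on (set (x # xs)) E'"
    using compl sub unfolding complete_on_def by (auto 0 3)
  moreover have "2 * length ?qs = length (x # xs) * (length (x # xs) - 1)"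
    using len by (cases "length xs") auto
  moreover have "\<forall>(i, j) \<in> set ?qs. i \<in> set (x # xs) \<and> j \<in> set (x # xs) \<and> i \<noteq> j"
    using qs Cons.prems(1) by auto
  moreover have "run (round_robin (x # xs) E c) T = (?qs @ fst (run (c E') T), snd (run (c E') T))"
    using run by (simp add: run_query_against)
  moreover have "E \<subseteq> E'" using sub subset_record_against by blast
  ultimately show ?case using sound by (intro exI[of _ E'] exI[of _ ?qs]) simp
qed

text \<open>Every off-diagonal pair of A is an in-edge or a reversed in-edge, so the in-degrees sum
  to at least |A|(|A| - 1)/2.\<close>

lemma exists_large_indegree:
  assumes "finite A" "A \<noteq> {}" "complete_on A E"
  shows "\<exists>v\<in>A. card A - 1 \<le> 2 * card {w\<in>A. (w, v) \<in> E}"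
proof (rule ccontr)
  let ?indeg = "\<lambda>v. card {w\<in>A. (w, v) \<in> E}"
  assume "\<not> ?thesis"
  then have small: "2 * ?indeg v < card A - 1" if "v \<in> A" for v
    using that by (simp add: not_le)
  define D where "D = (SIGMA v:A. {w\<in>A. (w, v) \<in> E})"
  have fin: "finite D" using assms(1) unfolding D_def by auto
  have "A \<times> A - Id_on A \<subseteq> D \<union> prod.swap ` D"
  proof
    fix p assume "p \<in> A \<times> A - Id_on A"
    then obtain a b where "p = (a, b)" "a \<in> A" "b \<in> A" "a \<noteq> b" by (auto simp: Id_on_def)
    then show "p \<in> D \<union> prod.swap ` D"
      using assms(3) unfolding D_def complete_on_def by (auto intro: image_eqI[of _ _ "(b, a)"])
  qed
  then have "card (A \<times> A - Id_on A) \<le> card (D \<union> prod.swap ` D)"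
    using fin by (intro card_mono) auto
  also have "\<dots> \<le> 2 * card D"
    using card_Un_le[of D "prod.swap ` D"] card_image_le[OF fin, of prod.swap] by linarith
  also have "\<dots> = (\<Sum>v\<in>A. 2 * ?indeg v)"
    unfolding D_def using assms(1) by (simp add: card_SigmaI sum_distrib_left)
  also have "\<dots> < (\<Sum>v\<in>A. card A - 1)"
    using assms(1,2) small by (rule sum_strict_mono)
  also have "\<dots> = card A * card A - card A" by (simp add: diff_mult_distrib2)
  also have "\<dots> = card (A \<times> A - Id_on A)"
  proof -
    have "Id_on A = (\<lambda>a. (a, a)) ` A" by (auto simp: Id_on_def)
    then have "card (Id_on A) = card A" by (simp add: card_image inj_on_def)
    moreover have "Id_on A \<subseteq> A \<times> A" by auto
    ultimately show ?thesis
      using assms(1) by (simp add: card_Diff_subset card_cartesian_product finite_subset)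
  qed
  finally show False by simp
qed

lemma beaten_by_uncorrupted_max_only_if_corrupted:
  assumes "tournament n T" "sound_record T E" "uncorrupted_max n C T u" "w < n" "(w, u) \<in> E"
  shows "w \<in> C"
proof (rule ccontr)
  assume "w \<notin> C"
  have "w \<noteq> u" "T w u" using assms(2,5) unfolding sound_record_def by auto
  with \<open>w \<notin> C\<close> assms(3,4) have "T u w" unfolding uncorrupted_max_def by blast
  with \<open>w \<noteq> u\<close> \<open>T w u\<close> assms(1,3,4) show False unfolding tournament_def uncorrupted_max_def by blast
qed

definition loser :: "nat \<Rightarrow> nat list \<Rightarrow> (nat \<times> nat) set \<Rightarrow> nat" where
  "loser k L E = (SOME v. v \<in> set L \<and> k + 1 \<le> card {w\<in>set L. (w, v) \<in> E})"

lemma loser_not_uncorrupted_max: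
  assumes "tournament n T" "C \<subseteq> {0..<n}" "card C = k" "sound_record T E" "complete_on (set L) E"
    "distinct L" "length L = 2 * k + 2" "set L \<subseteq> {..<n}"
  shows "loser k L E \<in> set L" "\<not> uncorrupted_max n C T (loser k L E)"
proof -
  have "card (set L) = 2 * k + 2" using assms(6,7) by (simp add: distinct_card)
  then have "\<exists>v. v \<in> set L \<and> k + 1 \<le> card {w\<in>set L. (w, v) \<in> E}"
    using exists_large_indegree[OF _ _ assms(5)] by fastforce
  then have "loser k L E \<in> set L \<and> k + 1 \<le> card {w\<in>set L. (w, loser k L E) \<in> E}"
    unfolding loser_def by (rule someI_ex)
  then have loser: "loser k L E \<in> set L" "k + 1 \<le> card {w\<in>set L. (w, loser k L E) \<in> E}"
    by auto
  then show "loser k L E \<in> set L" by blast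
  show "\<not> uncorrupted_max n C T (loser k L E)"
  proof
    assume max: "uncorrupted_max n C T (loser k L E)"
    have "{w\<in>set L. (w, loser k L E) \<in> E} \<subseteq> C"
    proof
      fix w assume "w \<in> {w\<in>set L. (w, loser k L E) \<in> E}"
      then have "w < n" "(w, loser k L E) \<in> E" using assms(8) by auto
      then show "w \<in> C" by (rule beaten_by_uncorrupted_max_only_if_corrupted[OF assms(1,4) max])
    qed
    then have "card {w\<in>set L. (w, loser k L E) \<in> E} \<le> k"
      using card_mono[OF finite_subset[OF assms(2) finite_atLeastLessThan]] assms(3) by blast
    with loser(2) show False by simp
  qed
qed

primrec sift :: "nat \<Rightarrow> nat list \<Rightarrow> nat list \<Rightarrow> (nat \<times> nat) set \<Rightarrow> alg" where
  "sift k [] L E = Output (set L)"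
| "sift k (x # xs) L E =
     query_against x L E (\<lambda>E'. sift k xs (remove1 (loser k (x # L) E') (x # L)) E')"

lemma good_outcome_sift:
  assumes "tournament n T" "C \<subseteq> {0..<n}" "card C = k"
  shows "distinct (xs @ L) \<Longrightarrow> set (xs @ L) \<subseteq> {..<n} \<Longrightarrow> length L = 2 * k + 1 \<Longrightarrow>
    sound_record T E \<Longrightarrow> complete_on (set L) E \<Longrightarrow>
    (\<forall>u. uncorrupted_max n C T u \<longrightarrow> u \<in> set L \<union> set xs) \<Longrightarrow>
    good_outcome n k C T (length xs * (2 * k + 1)) (run (sift k xs L E) T)"
proof (induction xs arbitrary: L E)
  case Nil
  then show ?case by (auto simp: good_outcome_def valid_queries_def distinct_card)
next
  case (Cons x xs)
  let ?E = "record_against x L T E"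
  let ?v = "loser k (x # L) ?E"
  let ?L = "remove1 ?v (x # L)"
  have sound: "sound_record T ?E"
    using sound_record_against[OF assms(1) Cons.prems(4), of x L] Cons.prems(1,2) by auto
  have compl: "complete_on (set (x # L)) ?E"
    using complete_on_record_against Cons.prems(5) by blast
  have v: "?v \<in> set (x # L)" "\<not> uncorrupted_max n C T ?v"
    using loser_not_uncorrupted_max[OF assms sound compl] Cons.prems(1-3) by auto
  have set_L: "set ?L = set (x # L) - {?v}"
  proof -
    have "distinct (x # L)" using Cons.prems(1) by simp
    then show ?thesis by (simp only: set_remove1_eq)
  qed
  obtain qs S where run: "run (sift k xs ?L ?E) T = (qs, S)" by fastforce
  have rest: "good_outcome n k C T (length xs * (2 * k + 1)) (qs, S)"
    unfolding run[symmetric]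
  proof (rule Cons.IH)
    show "distinct (xs @ ?L)" "set (xs @ ?L) \<subseteq> {..<n}"
      using Cons.prems(1,2) set_L by auto
    have "length ?L = length (x # L) - 1" using v(1) by (simp only: length_remove1 if_True)
    then show "length ?L = 2 * k + 1" using Cons.prems(3) by simp
    show "complete_on (set ?L) ?E" using compl set_L unfolding complete_on_def by auto
    show "\<forall>u. uncorrupted_max n C T u \<longrightarrow> u \<in> set ?L \<union> set xs"
      using Cons.prems(6) v(2) set_L by auto
  qed (rule sound)
  have "valid_queries n (map (Pair x) L)"
    using Cons.prems(1,2) by (auto simp: valid_queries_def)
  from good_outcome_prepend[OF rest this]
  have "good_outcome n k C T (length (x # xs) * (2 * k + 1)) (map (Pair x) L @ qs, S)"
    using Cons.prems(3) by (simp add: algebra_simps)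
  moreover have "run (sift k (x # xs) L E) T = (map (Pair x) L @ qs, S)"
    using run by (simp add: run_query_against)
  ultimately show ?case by simp
qed

definition candidate_filter :: "nat \<Rightarrow> nat \<Rightarrow> alg" where
  "candidate_filter n k = round_robin [0..<2 * k + 1] {} (sift k [2 * k + 1..<n] [0..<2 * k + 1])"

lemma good_outcome_candidate_filter:
  assumes "valid_instance n k C T" "2 * k + 1 < n"
  shows "good_outcome n k C T ((n - (k + 1)) * (2 * k + 1)) (run (candidate_filter n k) T)"
proof -
  have inst: "tournament n T" "C \<subseteq> {0..<n}" "card C = k"
    using assms(1) unfolding valid_instance_def by auto
  let ?pool = "[0..<2 * k + 1]" and ?rest = "[2 * k + 1..<n]"
  have "distinct ?pool" "set ?pool \<subseteq> {..<n}" "sound_record T {}"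
    using assms(2) by (auto simp: sound_record_def)
  from run_round_robin[OF inst(1) this, of "sift k ?rest ?pool"]
  obtain E qs where run: "run (candidate_filter n k) T
        = (qs @ fst (run (sift k ?rest ?pool E) T), snd (run (sift k ?rest ?pool E) T))"
      and qs: "\<forall>(i, j) \<in> set qs. i \<in> set ?pool \<and> j \<in> set ?pool \<and> i \<noteq> j"
      and len: "2 * length qs = length ?pool * (length ?pool - 1)"
      and E: "sound_record T E" "complete_on (set ?pool) E"
    unfolding candidate_filter_def by blast
  obtain qs' S where run_sift_eq: "run (sift k ?rest ?pool E) T = (qs', S)" by fastforce
  have "good_outcome n k C T (length ?rest * (2 * k + 1)) (qs', S)"
    unfolding run_sift_eq[symmetric]
    by (rule good_outcome_sift[OF inst]) (use E assms(2) in \<open>auto simp: uncorrupted_max_def\<close>)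
  moreover have "valid_queries n qs" using qs assms(2) by (fastforce simp: valid_queries_def)
  moreover have "length qs + length ?rest * (2 * k + 1) = (n - (k + 1)) * (2 * k + 1)"
  proof -
    have "length qs = k * (2 * k + 1)" using len by simp
    moreover have "n - (k + 1) = k + (n - (2 * k + 1))" using assms(2) by simp
    ultimately show ?thesis by (simp add: add_mult_distrib)
  qed
  ultimately show ?thesis
    unfolding run run_sift_eq by (metis good_outcome_prepend fst_conv snd_conv)
qed

theorem mainTheorem4:
  fixes n k :: nat
  assumes "n > 2 * k + 1"
  shows "\<exists>A :: alg. \<forall>C T. valid_instance n k C T \<longrightarrow>
           (let (qs, S) = run A T in
              (\<forall>(i, j) \<in> set qs. i < n \<and> j < n \<and> i \<noteq> j)
            \<and> length qs = (n - (k + 1)) * (2 * k + 1)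
            \<and> S \<subseteq> {0..<n} \<and> card S = 2 * k + 1
            \<and> (\<forall>u. uncorrupted_max n C T u \<longrightarrow> u \<in> S))"
  using good_outcome_candidate_filter[OF _ assms]
  unfolding good_outcome_def valid_queries_def by blast

end
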